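(* Define $F=(n_F)_{n\ge0}$ by $0_F=1$ and, for $n\ge1$, $n_F=a_n b_n$ where $a_n=2$ if $n$ is even and $a_n=1$ if $n$ is odd, and $b_n=3$ if $3\mid n$ and $b_n=1$ otherwise (so $F=1;\,1,2,3,2,1,6,1,2,3,\dots$ listing from $n=0$). Then $F$ is cobweb-admissible, but the layer $\langle\Phi_5\to\Phi_7\rangle$ of its cobweb poset (whose levels have $1,6,1$ vertices) admits no tiling by blocks of type $\sigma P_3$. Consequently, not every cobweb-admissible sequence is a cobweb tiling sequence.
   Context: Notation: $n_F\equiv F_n$. A sequence $F=(n_F)_{n\ge0}$ of natural numbers with $0_F=1$ is cobweb-admissible iff every $F$-nomial coefficient $\binom{n}{k}_F=\frac{n_F(n-1)_F\cdots(n-k+1)_F}{1_F2_F\cdots k_F}$, $0\le k\le n$, is a nonnegative integer. The cobweb poset of $F$ has, for each $s\ge1$, a level $\Phi_s$ consisting of $s_F$ distinct vertices (levels pairwise disjoint), plus a root level $\Phi_0$ with one vertex; for $x\in\Phi_i$, $y\in\Phi_j$ one has $x<y$ iff $i<j$. For $1\le a\le b$, the layer $\langle\Phi_a\to\Phi_b\rangle$ is the subposet on $\Phi_a\cup\dots\cup\Phi_b$; it has $m=b-a+1$ levels and its maximal chains form the set $\Phi_a\times\dots\times\Phi_b$. For a permutation $\sigma$ of $\{1,\dots,m\}$, a block of type $\sigma P_m$ in this layer is the subposet induced on $V_a\cup\dots\cup V_b$ where $V_{a-1+i}\subseteq\Phi_{a-1+i}$ and $|V_{a-1+i}|=\sigma(i)_F$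 for $i=1,\dots,m$; its maximal chains form the set $V_a\times\dots\times V_b$. A tiling of the layer is a finite family of such blocks ($\sigma$ may vary from block to block) whose sets $V_a\times\dots\times V_b$ partition $\Phi_a\times\dots\times\Phi_b$ (pairwise max-disjoint and covering all maximal chains). A cobweb tiling sequence is a cobweb-admissible sequence $F$ such that for all $1\le a\le b$ the layer $\langle\Phi_a\to\Phi_b\rangle$ admits a tiling by blocks of type $\sigma P_{b-a+1}$. *)

theory Defs
  imports Complex_Main "HOL-Combinatorics.Permutations"
begin

definition fnomial :: "(nat \<Rightarrow> nat) \<Rightarrow> nat \<Rightarrow> nat \<Rightarrow> rat" where
  "fnomial F n k = of_nat (\<Prod>i\<in>{n-k+1..n}. F i) / of_nat (\<Prod>i\<in>{1..k}. F i)"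

definition cobweb_admissible :: "(nat \<Rightarrow> nat) \<Rightarrow> bool" where
  "cobweb_admissible F \<longleftrightarrow> F 0 = 1 \<and>
     (\<forall>n k. k \<le> n \<longrightarrow> (\<Prod>i\<in>{1..k}. F i) \<noteq> 0 \<and> (\<exists>q::nat. fnomial F n k = of_nat q))"

text \<open>Level s of the cobweb poset is represented by the vertex set {0..<F s}
  (levels are disjoint since a vertex is tagged by its level).
  A maximal chain of the layer <Phi_a -> Phi_b> (m = b - a + 1 levels) is a list c of
  length m with c!i a vertex of level a+i.\<close>
definition layer_chains :: "(nat \<Rightarrow> nat) \<Rightarrow> nat \<Rightarrow> nat \<Rightarrow> nat list set" where
  "layer_chains F a b = {c. length c = b - a + 1 \<and> (\<forall>i < b - a + 1. c ! i < F (a + i))}"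

definition is_block :: "(nat \<Rightarrow> nat) \<Rightarrow> nat \<Rightarrow> nat \<Rightarrow> (nat \<Rightarrow> nat) \<Rightarrow> (nat \<Rightarrow> nat set) \<Rightarrow> bool" where
  "is_block F a b \<sigma> V \<longleftrightarrow> \<sigma> permutes {1..b - a + 1} \<and>
     (\<forall>i < b - a + 1. V i \<subseteq> {..<F (a + i)} \<and> card (V i) = F (\<sigma> (i + 1)))"

definition block_chains :: "nat \<Rightarrow> nat \<Rightarrow> (nat \<Rightarrow> nat set) \<Rightarrow> nat list set" where
  "block_chains a b V = {c. length c = b - a + 1 \<and> (\<forall>i < b - a + 1. c ! i \<in> V i)}"

definition layer_has_tiling :: "(nat \<Rightarrow> nat) \<Rightarrow> nat \<Rightarrow> nat \<Rightarrow> bool" where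
  "layer_has_tiling F a b \<longleftrightarrow>
     (\<exists>bs :: ((nat \<Rightarrow> nat) \<times> (nat \<Rightarrow> nat set)) list.
        (\<forall>j < length bs. is_block F a b (fst (bs ! j)) (snd (bs ! j))) \<and>
        (\<forall>j < length bs. \<forall>l < length bs. j \<noteq> l \<longrightarrow>
            block_chains a b (snd (bs ! j)) \<inter> block_chains a b (snd (bs ! l)) = {}) \<and>
        (\<Union>j < length bs. block_chains a b (snd (bs ! j))) = layer_chains F a b)"

definition cobweb_tiling_sequence :: "(nat \<Rightarrow> nat) \<Rightarrow> bool" where
  "cobweb_tiling_sequence F \<longleftrightarrow> cobweb_admissible F \<and>
     (\<forall>a b. 1 \<le> a \<and> a \<le> b \<longrightarrow> layer_has_tiling F a b)"

definition Fex :: "nat \<Rightarrow> nat" where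
  "Fex n = (if n = 0 then 1 else (if even n then 2 else 1) * (if 3 dvd n then 3 else 1))"

end

theory Submission
  imports Defs
begin

(* Write F!n for the F-factorial 1_F 2_F ... n_F.  For a sequence with
   positive terms the F-nomial coefficient is F!n / (F!(n-k) F!k), exactly as for
   ordinary binomials.  For the example sequence, n_F is the product of a factor 2
   when 2 divides n and a factor 3 when 3 divides n, so counting multiples gives
   F!n = 2^(n div 2) 3^(n div 3).  Superadditivity of floor division,
   (n-k) div d + k div d <= n div d, then shows that every coefficient is
   2^e 3^e' with natural exponents: the sequence is cobweb-admissible.
   For the tiling part: a block must fit into the layer level by level, so
   sigma(i)_F <= (a-1+i)_F.  In the layer <Phi_5 -> Phi_7> the outer levels have a
   single vertex, and among 1_F, 2_F, 3_F = 1, 2, 3 only 1_F is <= 1; hence a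
   permutation sigma of {1,2,3} would need sigma 1 = sigma 3 = 1.  So no block of
   type sigma P_3 exists at all, while the layer does have maximal chains; thus no
   tiling exists, and the example is not a cobweb tiling sequence. *)

definition F_factorial :: "(nat \<Rightarrow> nat) \<Rightarrow> nat \<Rightarrow> nat" where
  "F_factorial F n = (\<Prod>i\<in>{1..n}. F i)"

lemma F_factorial_pos: "(\<And>i. 0 < F i) \<Longrightarrow> 0 < F_factorial F n"
  by (simp add: F_factorial_def)

text \<open>Factorial form of the F-nomial coefficient; it reduces admissibility to a
  divisibility property of F-factorials.\<close>
lemma fnomial_factorial_form:
  assumes pos: "\<And>i. 0 < F i" and "k \<le> n"
  shows "fnomial F n k = of_nat (F_factorial F n) / (of_nat (F_factorial F (n - k)) * of_nat (F_factorial F k))"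
proof -
  have split: "F_factorial F n = F_factorial F (n - k) * (\<Prod>i\<in>{n-k+1..n}. F i)"
    using prod.ub_add_nat[of 1 "n - k" F k] \<open>k \<le> n\<close> by (simp add: F_factorial_def)
  have "F_factorial F (n - k) \<noteq> 0"
    using F_factorial_pos[OF pos] by simp
  then show ?thesis
    unfolding fnomial_def split F_factorial_def[of F k, symmetric] by simp
qed

lemma of_nat_cancel_quotient:
  assumes "b \<noteq> 0" "c \<noteq> 0"
  shows "(of_nat (a * (b * c)) :: rat) / (of_nat b * of_nat c) = of_nat a"
  using assms by simp

lemma card_multiples_upto:
  assumes "0 < (d::nat)"
  shows "card {i \<in> {1..n}. d dvd i} = n div d"
proof (induction n)
  case 0
  then show ?case by simp
next
  case (Suc n)
  have set: "{i \<in> {1..Suc n}. d dvd i} =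
      {i \<in> {1..n}. d dvd i} \<union> (if d dvd Suc n then {Suc n} else {})"
    by (auto simp: le_Suc_eq)
  have "Suc n div d = n div d + (if d dvd Suc n then 1 else 0)"
    using assms by (auto simp: div_Suc dvd_eq_mod_eq_0)
  then show ?case
    unfolding set using Suc.IH by auto
qed

lemma prod_factor_on_multiples:
  assumes "0 < (d::nat)"
  shows "(\<Prod>i\<in>{1..n}. if d dvd i then c else 1) = (c::'a::comm_monoid_mult) ^ (n div d)"
  using card_multiples_upto[OF assms, of n]
  by (simp add: prod.If_cases Int_def conj_commute)

text \<open>Floor division is superadditive; this makes the exponents below natural.\<close>
lemma div_superadditive: "(m::nat) div d + k div d \<le> (m + k) div d"
  by (metis div_add1_eq le_add1)

lemma Fex_pos: "0 < Fex i"
  by (simp add: Fex_def)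

text \<open>The F-factorials of the example, obtained by counting multiples of 2 and 3.\<close>
lemma Fex_factorial: "F_factorial Fex n = 2 ^ (n div 2) * 3 ^ (n div 3)"
proof -
  have "F_factorial Fex n = (\<Prod>i\<in>{1..n}. (if 2 dvd i then 2 else 1) * (if 3 dvd i then 3 else 1))"
    unfolding F_factorial_def by (rule prod.cong) (auto simp: Fex_def)
  also have "\<dots> = 2 ^ (n div 2) * (3::nat) ^ (n div 3)"
    by (simp only: prod.distrib prod_factor_on_multiples zero_less_numeral)
  finally show ?thesis .
qed

lemma Fex_fnomial:
  assumes "k \<le> n"
  shows "fnomial Fex n k = of_nat (2 ^ (n div 2 - (n-k) div 2 - k div 2) * 3 ^ (n div 3 - (n-k) div 3 - k div 3))"
proof -
  define x2 where "x2 = n div 2 - (n-k) div 2 - k div 2"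
  define x3 where "x3 = n div 3 - (n-k) div 3 - k div 3"
  have e2: "n div 2 = x2 + ((n-k) div 2 + k div 2)"
    using div_superadditive[of "n - k" 2 k] assms unfolding x2_def by simp
  have e3: "n div 3 = x3 + ((n-k) div 3 + k div 3)"
    using div_superadditive[of "n - k" 3 k] assms unfolding x3_def by simp
  have "F_factorial Fex n = 2 ^ x2 * 3 ^ x3 * (F_factorial Fex (n - k) * F_factorial Fex k)"
    unfolding Fex_factorial e2 e3 power_add by (simp only: mult_ac)
  then show ?thesis
    unfolding fnomial_factorial_form[OF Fex_pos assms] x2_def[symmetric] x3_def[symmetric]
    using F_factorial_pos[OF Fex_pos] by (simp only: of_nat_cancel_quotient neq0_conv)
qed

lemma Fex_admissible: "cobweb_admissible Fex"
  unfolding cobweb_admissible_def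
proof (intro conjI allI impI)
  show "Fex 0 = 1" by (simp add: Fex_def)
next
  fix n k :: nat
  assume "k \<le> n"
  show "(\<Prod>i\<in>{1..k}. Fex i) \<noteq> 0"
    using F_factorial_pos[OF Fex_pos, where n = k] by (simp add: F_factorial_def)
  show "\<exists>q::nat. fnomial Fex n k = of_nat q"
    using Fex_fnomial[OF \<open>k \<le> n\<close>] by blast
qed

lemma block_level_bound:
  assumes "is_block F a b \<sigma> V" and "i < b - a + 1"
  shows "F (\<sigma> (i + 1)) \<le> F (a + i)"
proof -
  have "V i \<subseteq> {..<F (a + i)}" and "card (V i) = F (\<sigma> (i + 1))"
    using assms by (auto simp: is_block_def)
  then show ?thesis
    by (metis card_lessThan card_mono finite_lessThan)
qed

text \<open>A layer all of whose levels are nonempty has a maximal chain, so any tiling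
  of it contains at least one block.\<close>
lemma tiling_has_block:
  assumes "layer_has_tiling F a b" and nonempty: "\<And>i. i < b - a + 1 \<Longrightarrow> 0 < F (a + i)"
  shows "\<exists>\<sigma> V. is_block F a b \<sigma> V"
proof -
  obtain bs :: "((nat \<Rightarrow> nat) \<times> (nat \<Rightarrow> nat set)) list" where
    blocks: "\<forall>j < length bs. is_block F a b (fst (bs ! j)) (snd (bs ! j))" and
    cover: "(\<Union>j < length bs. block_chains a b (snd (bs ! j))) = layer_chains F a b"
    using assms(1) unfolding layer_has_tiling_def by blast
  have "replicate (b - a + 1) 0 \<in> layer_chains F a b"
    using nonempty by (simp add: layer_chains_def nth_replicate del: replicate.simps)
  then have "bs \<noteq> []"
    using cover by auto
  then show ?thesis
    using blocks by blast
qed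

lemma Fex_le_one_upto_3:
  assumes "k \<in> {1..3}" and "Fex k \<le> 1"
  shows "k = 1"
proof -
  have "k = 1 \<or> k = 2 \<or> k = 3"
    using assms(1) by auto
  then show ?thesis
    using assms(2) by (auto simp: Fex_def)
qed

text \<open>The outer levels 5 and 7 of this layer have one vertex each, which forces \<sigma> 1 = \<sigma> 3 = 1.\<close>
lemma Fex_no_block_5_7: "\<not> is_block Fex 5 7 \<sigma> V"
proof
  assume block: "is_block Fex 5 7 \<sigma> V"
  then have perm: "\<sigma> permutes {1..3}"
    by (simp add: is_block_def)
  have forced: "\<sigma> (i + 1) = 1" if "i = 0 \<or> i = 2" for i
  proof -
    have "Fex (\<sigma> (i + 1)) \<le> Fex (5 + i)"
      using block_level_bound[OF block, of i] that by auto
    moreover have "Fex (5 + i) = 1"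
      using that by (auto simp: Fex_def)
    moreover have "\<sigma> (i + 1) \<in> {1..3}"
      using permutes_in_image[OF perm, of "i + 1"] that by auto
    ultimately show ?thesis
      using Fex_le_one_upto_3 by simp
  qed
  have "\<sigma> 1 = \<sigma> 3"
    using forced[of 0] forced[of 2] by simp
  then show False
    using injD[OF permutes_inj[OF perm]] by fastforce
qed

lemma Fex_no_tiling_5_7: "\<not> layer_has_tiling Fex 5 7"
  using tiling_has_block[of Fex 5 7] Fex_no_block_5_7 Fex_pos by blast

theorem theorem3:
  shows "cobweb_admissible Fex \<and> \<not> layer_has_tiling Fex 5 7 \<and> \<not> cobweb_tiling_sequence Fex
         \<and> \<not> (\<forall>F. cobweb_admissible F \<longrightarrow> cobweb_tiling_sequence F)"
proof -
  have "\<not> cobweb_tiling_sequence Fex"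
    using Fex_no_tiling_5_7 unfolding cobweb_tiling_sequence_def by force
  then show ?thesis
    using Fex_admissible Fex_no_tiling_5_7 by blast
qed

end
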